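(* Let $\mathcal{S}\subseteq \mathsf{mod}\Lambda$ be a Serre subcategory. Then $\mathcal{S}$ is both a left finite wide subcategory and a right finite wide subcategory.
   Context: $\Lambda$ is a basic finite-dimensional algebra over a field, $\mathsf{mod}\Lambda$ finitely generated left modules. A Serre subcategory is closed under extensions, submodules and quotients. A wide subcategory is closed under extensions, kernels, cokernels. For a torsion class $\mathcal T$ (closed under extensions and quotients), $\mathcal W_L(\mathcal T)=\{X\in\mathcal T\mid\forall Y\in\mathcal T, f:Y\to X:\ \ker f\in\mathcal T\}$; for a torsion-free class $\mathcal F$ (closed under extensions and submodules), $\mathcal W_R(\mathcal F)=\{X\in\mathcal F\mid\forall Y\in\mathcal F, f:X\to Y:\ \mathrm{coker} f\in\mathcal F\}$. A wide subcategory is left finite (resp. right finite) if it equals $\mathcal W_L(\mathcal T)$ for a functorially finite torsion class $\mathcal T$ (resp. $\mathcal W_R(\mathcal F)$ for a functorially finite torsion-free class $\mathcal F$); functorially finite means every module has left and right approximations by the subcategory. *)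

theory Defs
  imports Main "Jordan_Normal_Form.Matrix"
begin

definition fd_algebra :: "('k::field \<Rightarrow> 'l::ring_1 \<Rightarrow> 'l) \<Rightarrow> bool" where
  "fd_algebra sc \<longleftrightarrow> vector_space sc
     \<and> (\<forall>c x y. sc c (x * y) = sc c x * y \<and> sc c (x * y) = x * sc c y)
     \<and> (\<exists>B. finite B \<and> module.span sc B = UNIV)"

definition primitive_idem :: "'l::ring_1 \<Rightarrow> bool" where
  "primitive_idem e \<longleftrightarrow> e * e = e \<and> e \<noteq> 0 \<and>
     (\<forall>f g. f * f = f \<and> g * g = g \<and> f * g = 0 \<and> g * f = 0 \<and> f + g = e \<longrightarrow> f = 0 \<or> g = 0)"

text \<open>Basic: for a complete set of pairwise orthogonal primitive idempotents
 e_1,...,e_n, the indecomposable projectives Lambda e_i are pairwise non-isomorphic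
 (Lambda e_i \<cong> Lambda e_j iff there are a in e_i Lambda e_j, b in e_j Lambda e_i with ab = e_i, ba = e_j).\<close>

definition basic_algebra :: "'l::ring_1 itself \<Rightarrow> bool" where
  "basic_algebra _ \<longleftrightarrow> (\<forall>es :: 'l list.
     (sum_list es = 1 \<and> (\<forall>i<length es. primitive_idem (es ! i)) \<and>
      (\<forall>i j. i < length es \<and> j < length es \<and> i \<noteq> j \<longrightarrow> es ! i * es ! j = 0))
     \<longrightarrow> (\<forall>i j. i < length es \<and> j < length es \<and> i \<noteq> j \<longrightarrow>
           \<not> (\<exists>a b. a = es ! i * a * es ! j \<and> b = es ! j * b * es ! i
                  \<and> a * b = es ! i \<and> b * a = es ! j)))"

text \<open>A module in mod Lambda is k^n (column vectors) with Lambda acting by n x n matrices.\<close>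

type_synonym ('k, 'l) rep = "nat \<times> ('l \<Rightarrow> 'k mat)"

abbreviation rdim :: "('k, 'l) rep \<Rightarrow> nat" where "rdim M \<equiv> fst M"
abbreviation ract :: "('k, 'l) rep \<Rightarrow> 'l \<Rightarrow> 'k mat" where "ract M \<equiv> snd M"

definition is_module :: "('k::field \<Rightarrow> 'l::ring_1 \<Rightarrow> 'l) \<Rightarrow> ('k, 'l) rep \<Rightarrow> bool" where
  "is_module sc M \<longleftrightarrow>
     (\<forall>x. ract M x \<in> carrier_mat (rdim M) (rdim M)) \<and>
     ract M 1 = 1\<^sub>m (rdim M) \<and>
     (\<forall>x y. ract M (x * y) = ract M x * ract M y) \<and>
     (\<forall>x y. ract M (x + y) = ract M x + ract M y) \<and>
     (\<forall>c x. ract M (sc c x) = c \<cdot>\<^sub>m ract M x)"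

definition is_hom :: "('k::field, 'l) rep \<Rightarrow> ('k, 'l) rep \<Rightarrow> 'k mat \<Rightarrow> bool" where
  "is_hom M N F \<longleftrightarrow> F \<in> carrier_mat (rdim N) (rdim M) \<and> (\<forall>x. F * ract M x = ract N x * F)"

definition is_mono :: "('k::field, 'l) rep \<Rightarrow> ('k, 'l) rep \<Rightarrow> 'k mat \<Rightarrow> bool" where
  "is_mono M N F \<longleftrightarrow> (\<forall>v \<in> carrier_vec (rdim M). F *\<^sub>v v = 0\<^sub>v (rdim N) \<longrightarrow> v = 0\<^sub>v (rdim M))"

definition is_epi :: "('k::field, 'l) rep \<Rightarrow> ('k, 'l) rep \<Rightarrow> 'k mat \<Rightarrow> bool" where
  "is_epi M N F \<longleftrightarrow> (\<forall>w \<in> carrier_vec (rdim N). \<exists>v \<in> carrier_vec (rdim M). F *\<^sub>v v = w)"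

definition is_kernel ::
  "('k::field, 'l) rep \<Rightarrow> ('k, 'l) rep \<Rightarrow> 'k mat \<Rightarrow> ('k, 'l) rep \<Rightarrow> 'k mat \<Rightarrow> bool" where
  "is_kernel M N F K I \<longleftrightarrow> is_hom K M I \<and> is_mono K M I \<and> F * I = 0\<^sub>m (rdim N) (rdim K) \<and>
     (\<forall>v \<in> carrier_vec (rdim M). F *\<^sub>v v = 0\<^sub>v (rdim N) \<longrightarrow> (\<exists>w \<in> carrier_vec (rdim K). I *\<^sub>v w = v))"

definition is_cokernel ::
  "('k::field, 'l) rep \<Rightarrow> ('k, 'l) rep \<Rightarrow> 'k mat \<Rightarrow> ('k, 'l) rep \<Rightarrow> 'k mat \<Rightarrow> bool" where
  "is_cokernel M N F C P \<longleftrightarrow> is_hom N C P \<and> is_epi N C P \<and> P * F = 0\<^sub>m (rdim C) (rdim M) \<and>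
     (\<forall>w \<in> carrier_vec (rdim N). P *\<^sub>v w = 0\<^sub>v (rdim C) \<longrightarrow> (\<exists>v \<in> carrier_vec (rdim M). F *\<^sub>v v = w))"

definition short_exact ::
  "('k::field, 'l) rep \<Rightarrow> ('k, 'l) rep \<Rightarrow> ('k, 'l) rep \<Rightarrow> 'k mat \<Rightarrow> 'k mat \<Rightarrow> bool" where
  "short_exact X Y Z I P \<longleftrightarrow> is_hom X Y I \<and> is_hom Y Z P \<and> is_mono X Y I \<and> is_epi Y Z P \<and>
     P * I = 0\<^sub>m (rdim Z) (rdim X) \<and>
     (\<forall>w \<in> carrier_vec (rdim Y). P *\<^sub>v w = 0\<^sub>v (rdim Z) \<longrightarrow> (\<exists>v \<in> carrier_vec (rdim X). I *\<^sub>v v = w))"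

section \<open>Subcategories (given by their classes of objects; full)\<close>

type_synonym ('k, 'l) subcat = "('k, 'l) rep set"

definition subcat :: "('k::field \<Rightarrow> 'l::ring_1 \<Rightarrow> 'l) \<Rightarrow> ('k, 'l) subcat \<Rightarrow> bool" where
  "subcat sc S \<longleftrightarrow> S \<noteq> {} \<and> (\<forall>M \<in> S. is_module sc M)"

definition ext_closed :: "('k::field \<Rightarrow> 'l::ring_1 \<Rightarrow> 'l) \<Rightarrow> ('k, 'l) subcat \<Rightarrow> bool" where
  "ext_closed sc S \<longleftrightarrow> (\<forall>X Y Z I P. is_module sc X \<and> is_module sc Y \<and> is_module sc Z \<and>
      short_exact X Y Z I P \<and> X \<in> S \<and> Z \<in> S \<longrightarrow> Y \<in> S)"

definition sub_closed :: "('k::field \<Rightarrow> 'l::ring_1 \<Rightarrow> 'l) \<Rightarrow> ('k, 'l) subcat \<Rightarrow> bool" where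
  "sub_closed sc S \<longleftrightarrow> (\<forall>X Y F. is_module sc X \<and> Y \<in> S \<and> is_hom X Y F \<and> is_mono X Y F \<longrightarrow> X \<in> S)"

definition quot_closed :: "('k::field \<Rightarrow> 'l::ring_1 \<Rightarrow> 'l) \<Rightarrow> ('k, 'l) subcat \<Rightarrow> bool" where
  "quot_closed sc S \<longleftrightarrow> (\<forall>X Y F. is_module sc X \<and> Y \<in> S \<and> is_hom Y X F \<and> is_epi Y X F \<longrightarrow> X \<in> S)"

definition ker_closed :: "('k::field \<Rightarrow> 'l::ring_1 \<Rightarrow> 'l) \<Rightarrow> ('k, 'l) subcat \<Rightarrow> bool" where
  "ker_closed sc S \<longleftrightarrow> (\<forall>X Y F K I. X \<in> S \<and> Y \<in> S \<and> is_hom X Y F \<and>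
      is_module sc K \<and> is_kernel X Y F K I \<longrightarrow> K \<in> S)"

definition coker_closed :: "('k::field \<Rightarrow> 'l::ring_1 \<Rightarrow> 'l) \<Rightarrow> ('k, 'l) subcat \<Rightarrow> bool" where
  "coker_closed sc S \<longleftrightarrow> (\<forall>X Y F C P. X \<in> S \<and> Y \<in> S \<and> is_hom X Y F \<and>
      is_module sc C \<and> is_cokernel X Y F C P \<longrightarrow> C \<in> S)"

definition serre_subcat :: "('k::field \<Rightarrow> 'l::ring_1 \<Rightarrow> 'l) \<Rightarrow> ('k, 'l) subcat \<Rightarrow> bool" where
  "serre_subcat sc S \<longleftrightarrow> subcat sc S \<and> ext_closed sc S \<and> sub_closed sc S \<and> quot_closed sc S"

definition wide_subcat :: "('k::field \<Rightarrow> 'l::ring_1 \<Rightarrow> 'l) \<Rightarrow> ('k, 'l) subcat \<Rightarrow> bool" where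
  "wide_subcat sc S \<longleftrightarrow> subcat sc S \<and> ext_closed sc S \<and> ker_closed sc S \<and> coker_closed sc S"

definition torsion_class :: "('k::field \<Rightarrow> 'l::ring_1 \<Rightarrow> 'l) \<Rightarrow> ('k, 'l) subcat \<Rightarrow> bool" where
  "torsion_class sc T \<longleftrightarrow> subcat sc T \<and> ext_closed sc T \<and> quot_closed sc T"

definition torsionfree_class :: "('k::field \<Rightarrow> 'l::ring_1 \<Rightarrow> 'l) \<Rightarrow> ('k, 'l) subcat \<Rightarrow> bool" where
  "torsionfree_class sc F \<longleftrightarrow> subcat sc F \<and> ext_closed sc F \<and> sub_closed sc F"

definition has_right_approx :: "('k::field, 'l) subcat \<Rightarrow> ('k, 'l) rep \<Rightarrow> bool" where
  "has_right_approx T M \<longleftrightarrow> (\<exists>T0 G. T0 \<in> T \<and> is_hom T0 M G \<and>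
     (\<forall>T1 H. T1 \<in> T \<and> is_hom T1 M H \<longrightarrow> (\<exists>U. is_hom T1 T0 U \<and> G * U = H)))"

definition has_left_approx :: "('k::field, 'l) subcat \<Rightarrow> ('k, 'l) rep \<Rightarrow> bool" where
  "has_left_approx T M \<longleftrightarrow> (\<exists>T0 G. T0 \<in> T \<and> is_hom M T0 G \<and>
     (\<forall>T1 H. T1 \<in> T \<and> is_hom M T1 H \<longrightarrow> (\<exists>U. is_hom T0 T1 U \<and> U * G = H)))"

definition functorially_finite :: "('k::field \<Rightarrow> 'l::ring_1 \<Rightarrow> 'l) \<Rightarrow> ('k, 'l) subcat \<Rightarrow> bool" where
  "functorially_finite sc T \<longleftrightarrow>
     (\<forall>M. is_module sc M \<longrightarrow> has_left_approx T M \<and> has_right_approx T M)"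

definition W_L :: "('k::field \<Rightarrow> 'l::ring_1 \<Rightarrow> 'l) \<Rightarrow> ('k, 'l) subcat \<Rightarrow> ('k, 'l) subcat" where
  "W_L sc T = {X \<in> T. \<forall>Y F. Y \<in> T \<and> is_hom Y X F \<longrightarrow>
      (\<forall>K I. is_module sc K \<and> is_kernel Y X F K I \<longrightarrow> K \<in> T)}"

definition W_R :: "('k::field \<Rightarrow> 'l::ring_1 \<Rightarrow> 'l) \<Rightarrow> ('k, 'l) subcat \<Rightarrow> ('k, 'l) subcat" where
  "W_R sc F = {X \<in> F. \<forall>Y G. Y \<in> F \<and> is_hom X Y G \<longrightarrow>
      (\<forall>C P. is_module sc C \<and> is_cokernel X Y G C P \<longrightarrow> C \<in> F)}"

definition left_finite_wide :: "('k::field \<Rightarrow> 'l::ring_1 \<Rightarrow> 'l) \<Rightarrow> ('k, 'l) subcat \<Rightarrow> bool" where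
  "left_finite_wide sc W \<longleftrightarrow> wide_subcat sc W \<and>
     (\<exists>T. torsion_class sc T \<and> functorially_finite sc T \<and> W = W_L sc T)"

definition right_finite_wide :: "('k::field \<Rightarrow> 'l::ring_1 \<Rightarrow> 'l) \<Rightarrow> ('k, 'l) subcat \<Rightarrow> bool" where
  "right_finite_wide sc W \<longleftrightarrow> wide_subcat sc W \<and>
     (\<exists>F. torsionfree_class sc F \<and> functorially_finite sc F \<and> W = W_R sc F)"

end

theory Submission
  imports Defs "Jordan_Normal_Form.Determinant"
begin

text \<open>Closure under submodules and quotients makes a Serre subcategory S closed under kernels
  and cokernels, a torsion class and a torsion-free class, and equal to both W_L S and W_R S.
  The real content is functorial finiteness. A submodule T0 of M that lies in S and has maximal
  dimension is a right S-approximation: for a map T1 \<rightarrow> M with T1 in S, the image of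
  T0 \<oplus> T1 \<rightarrow> M is a quotient of a module in S, hence lies in S, and contains the image of T0;
  by maximality both images coincide, so the map factors through T0. Dually, a quotient of M
  that lies in S and has maximal dimension is a left S-approximation.\<close>

section \<open>Block matrices\<close>

definition append_cols :: "'a :: zero mat \<Rightarrow> 'a mat \<Rightarrow> 'a mat" (infixr \<open>@\<^sub>c\<close> 65) where
  "A @\<^sub>c B = four_block_mat A B (0\<^sub>m 0 (dim_col A)) (0\<^sub>m 0 (dim_col B))"

lemma carrier_append_cols [simp, intro]:
  "A \<in> carrier_mat nr nc1 \<Longrightarrow> B \<in> carrier_mat nr nc2 \<Longrightarrow> A @\<^sub>c B \<in> carrier_mat nr (nc1 + nc2)"
  unfolding append_cols_def carrier_mat_def by auto

lemma four_block_mat_empty: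
  "A \<in> carrier_mat nr nc \<Longrightarrow> four_block_mat A (0\<^sub>m nr 0) (0\<^sub>m 0 nc) (0\<^sub>m 0 0) = (A :: 'a :: zero mat)"
  by (rule eq_matI) auto

lemma append_cols_mult_append_rows:
  fixes A :: "'a :: comm_ring_1 mat"
  assumes "A \<in> carrier_mat n a" "B \<in> carrier_mat n b" "C \<in> carrier_mat a m" "D \<in> carrier_mat b m"
  shows "(A @\<^sub>c B) * (C @\<^sub>r D) = A * C + B * D"
proof -
  have "(A @\<^sub>c B) * (C @\<^sub>r D) =
      four_block_mat A B (0\<^sub>m 0 a) (0\<^sub>m 0 b) * four_block_mat C (0\<^sub>m a 0) D (0\<^sub>m b 0)"
    using assms unfolding append_cols_def append_rows_def by auto
  also have "\<dots> = four_block_mat (A * C + B * D) (0\<^sub>m n 0) (0\<^sub>m 0 m) (0\<^sub>m 0 0)"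
    using assms by (subst mult_four_block_mat[of _ n a _ b _ 0 _ _ m _ 0]) (auto intro!: cong_four_block_mat)
  finally show ?thesis
    using assms by (simp add: four_block_mat_empty)
qed

lemma append_rows_mult:
  fixes A :: "'a :: comm_ring_1 mat"
  assumes "A \<in> carrier_mat n1 k" "B \<in> carrier_mat n2 k" "C \<in> carrier_mat k m"
  shows "(A @\<^sub>r B) * C = (A * C) @\<^sub>r (B * C)"
proof -
  have "(A @\<^sub>r B) * C =
      four_block_mat A (0\<^sub>m n1 0) B (0\<^sub>m n2 0) * four_block_mat C (0\<^sub>m k 0) (0\<^sub>m 0 m) (0\<^sub>m 0 0)"
    using assms unfolding append_rows_def by (simp add: four_block_mat_empty)
  also have "\<dots> = four_block_mat (A * C) (0\<^sub>m n1 0) (B * C) (0\<^sub>m n2 0)"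
    using assms by (subst mult_four_block_mat[of _ n1 k _ 0 _ n2 _ _ m _ 0]) (auto intro!: cong_four_block_mat)
  finally show ?thesis
    using assms unfolding append_rows_def by simp
qed

lemma mult_append_cols:
  fixes A :: "'a :: comm_ring_1 mat"
  assumes "C \<in> carrier_mat m k" "A \<in> carrier_mat k a" "B \<in> carrier_mat k b"
  shows "C * (A @\<^sub>c B) = (C * A) @\<^sub>c (C * B)"
proof -
  have "C * (A @\<^sub>c B) =
      four_block_mat C (0\<^sub>m m 0) (0\<^sub>m 0 k) (0\<^sub>m 0 0) * four_block_mat A B (0\<^sub>m 0 a) (0\<^sub>m 0 b)"
    using assms unfolding append_cols_def by (simp add: four_block_mat_empty)
  also have "\<dots> = four_block_mat (C * A) (C * B) (0\<^sub>m 0 a) (0\<^sub>m 0 b)"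
    using assms by (subst mult_four_block_mat[of _ m k _ 0 _ 0 _ _ a _ b]) (auto intro!: cong_four_block_mat)
  finally show ?thesis
    using assms unfolding append_cols_def by simp
qed

lemma append_cols_mult_vec:
  fixes A :: "'a :: comm_ring_1 mat"
  assumes "A \<in> carrier_mat n a" "B \<in> carrier_mat n b" "u \<in> carrier_vec a" "w \<in> carrier_vec b"
  shows "(A @\<^sub>c B) *\<^sub>v (u @\<^sub>v w) = A *\<^sub>v u + B *\<^sub>v w"
proof -
  have "(A @\<^sub>c B) *\<^sub>v (u @\<^sub>v w) = (A *\<^sub>v u + B *\<^sub>v w) @\<^sub>v (0\<^sub>m 0 a *\<^sub>v u + 0\<^sub>m 0 b *\<^sub>v w)"
    unfolding append_cols_def using assms by (subst four_block_mat_mult_vec) auto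
  also have "\<dots> = A *\<^sub>v u + B *\<^sub>v w"
    by (rule eq_vecI) (use assms in auto)
  finally show ?thesis .
qed

definition block_diag :: "'a :: zero mat \<Rightarrow> 'a mat \<Rightarrow> 'a mat" where
  "block_diag X Y = four_block_mat X (0\<^sub>m (dim_row X) (dim_col Y)) (0\<^sub>m (dim_row Y) (dim_col X)) Y"

lemma block_diag_carrier [simp]:
  "X \<in> carrier_mat a a \<Longrightarrow> Y \<in> carrier_mat b b \<Longrightarrow> block_diag X Y \<in> carrier_mat (a + b) (a + b)"
  unfolding block_diag_def carrier_mat_def by auto

lemma append_cols_mult_block_diag:
  fixes A :: "'a :: comm_ring_1 mat"
  assumes "A \<in> carrier_mat n a" "B \<in> carrier_mat n b" "X \<in> carrier_mat a a" "Y \<in> carrier_mat b b"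
  shows "(A @\<^sub>c B) * block_diag X Y = (A * X) @\<^sub>c (B * Y)"
  using assms unfolding append_cols_def block_diag_def
  by (subst mult_four_block_mat[of _ n a _ b _ 0 _ _ a _ b]) (auto intro!: cong_four_block_mat)

lemma block_diag_mult_append_rows:
  fixes A :: "'a :: comm_ring_1 mat"
  assumes "A \<in> carrier_mat a n" "B \<in> carrier_mat b n" "X \<in> carrier_mat a a" "Y \<in> carrier_mat b b"
  shows "block_diag X Y * (A @\<^sub>r B) = (X * A) @\<^sub>r (Y * B)"
  using assms unfolding append_rows_def block_diag_def
  by (subst mult_four_block_mat[of _ a a _ b _ b _ _ n _ 0]) (auto intro!: cong_four_block_mat)

lemma block_diag_mult:
  fixes A :: "'a :: comm_ring_1 mat"
  assumes "A \<in> carrier_mat a a" "B \<in> carrier_mat b b" "X \<in> carrier_mat a a" "Y \<in> carrier_mat b b"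
  shows "block_diag A B * block_diag X Y = block_diag (A * X) (B * Y)"
  using assms unfolding block_diag_def
  by (subst mult_four_block_mat[of _ a a _ b _ b _ _ a _ b]) (auto intro!: cong_four_block_mat)

lemma block_diag_add:
  fixes A :: "'a :: comm_ring_1 mat"
  assumes "A \<in> carrier_mat a a" "B \<in> carrier_mat b b" "X \<in> carrier_mat a a" "Y \<in> carrier_mat b b"
  shows "block_diag A B + block_diag X Y = block_diag (A + X) (B + Y)"
  by (rule eq_matI) (use assms in \<open>auto simp: block_diag_def\<close>)

lemma block_diag_smult:
  fixes A :: "'a :: comm_ring_1 mat"
  assumes "A \<in> carrier_mat a a" "B \<in> carrier_mat b b"
  shows "c \<cdot>\<^sub>m block_diag A B = block_diag (c \<cdot>\<^sub>m A) (c \<cdot>\<^sub>m B)"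
  by (rule eq_matI) (use assms in \<open>auto simp: block_diag_def\<close>)

lemma block_diag_one: "block_diag (1\<^sub>m a) (1\<^sub>m b) = (1\<^sub>m (a + b) :: 'a :: comm_ring_1 mat)"
  unfolding block_diag_def by simp

lemma append_cols_mult_proj:
  fixes A :: "'a :: comm_ring_1 mat"
  assumes A: "A \<in> carrier_mat n a" and B: "B \<in> carrier_mat n b"
  shows "(A @\<^sub>c B) * (1\<^sub>m a @\<^sub>r 0\<^sub>m b a) = A" "(A @\<^sub>c B) * (0\<^sub>m a b @\<^sub>r 1\<^sub>m b) = B"
  using append_cols_mult_append_rows[OF A B, of "1\<^sub>m a" a "0\<^sub>m b a"]
    append_cols_mult_append_rows[OF A B, of "0\<^sub>m a b" b "1\<^sub>m b"] A B
  by simp_all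

lemma proj_mult_append_rows:
  fixes A :: "'a :: comm_ring_1 mat"
  assumes A: "A \<in> carrier_mat a n" and B: "B \<in> carrier_mat b n"
  shows "(1\<^sub>m a @\<^sub>c 0\<^sub>m a b) * (A @\<^sub>r B) = A" "(0\<^sub>m b a @\<^sub>c 1\<^sub>m b) * (A @\<^sub>r B) = B"
  using append_cols_mult_append_rows[of "1\<^sub>m a" a a "0\<^sub>m a b" b A n B]
    append_cols_mult_append_rows[of "0\<^sub>m b a" b a "1\<^sub>m b" b A n B] A B
  by simp_all

section \<open>Injective and surjective matrices over a field\<close>

definition inj_mat :: "'a :: field mat \<Rightarrow> bool" where
  "inj_mat A \<longleftrightarrow> (\<forall>v \<in> carrier_vec (dim_col A). A *\<^sub>v v = 0\<^sub>v (dim_row A) \<longrightarrow> v = 0\<^sub>v (dim_col A))"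

definition mat_range :: "'a :: field mat \<Rightarrow> 'a vec set" where
  "mat_range A = (\<lambda>v. A *\<^sub>v v) ` carrier_vec (dim_col A)"

definition surj_mat :: "'a :: field mat \<Rightarrow> bool" where
  "surj_mat A \<longleftrightarrow> carrier_vec (dim_row A) \<subseteq> mat_range A"

lemma inj_mat_iff:
  "A \<in> carrier_mat nr nc \<Longrightarrow> inj_mat A \<longleftrightarrow> (\<forall>v \<in> carrier_vec nc. A *\<^sub>v v = 0\<^sub>v nr \<longrightarrow> v = 0\<^sub>v nc)"
  unfolding inj_mat_def by auto

lemma mat_range_iff:
  "A \<in> carrier_mat nr nc \<Longrightarrow> w \<in> mat_range A \<longleftrightarrow> (\<exists>v \<in> carrier_vec nc. A *\<^sub>v v = w)"
  unfolding mat_range_def by auto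

lemma surj_mat_iff:
  "A \<in> carrier_mat nr nc \<Longrightarrow> surj_mat A \<longleftrightarrow> (\<forall>w \<in> carrier_vec nr. \<exists>v \<in> carrier_vec nc. A *\<^sub>v v = w)"
  unfolding surj_mat_def mat_range_def by auto

lemma zero_mat_mult_vec [simp]:
  "v \<in> carrier_vec nc \<Longrightarrow> 0\<^sub>m nr nc *\<^sub>v v = (0\<^sub>v nr :: 'a :: comm_ring_1 vec)"
  by (rule eq_vecI) (auto simp: scalar_prod_def)

lemma mat_mult_zero_vec [simp]:
  "A \<in> carrier_mat nr nc \<Longrightarrow> A *\<^sub>v 0\<^sub>v nc = (0\<^sub>v nr :: 'a :: comm_ring_1 vec)"
  by (rule eq_vecI) auto

lemma carrier_vec_0_eq: "v \<in> carrier_vec 0 \<Longrightarrow> v = 0\<^sub>v 0"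
  by (rule eq_vecI) auto

lemma zero_vec_append: "0\<^sub>v (a + b) = 0\<^sub>v a @\<^sub>v (0\<^sub>v b :: 'a :: zero vec)"
  by (rule eq_vecI) auto

text \<open>Padding a wide matrix with zero rows gives a singular square matrix.\<close>

lemma wide_mat_kernel_nontrivial:
  fixes A :: "'a :: field mat"
  assumes A: "A \<in> carrier_mat b a" and ba: "b < a"
  shows "\<exists>v \<in> carrier_vec a. v \<noteq> 0\<^sub>v a \<and> A *\<^sub>v v = 0\<^sub>v b"
proof -
  define c where "c i = (if i < b then row A i else 0\<^sub>v a)" for i
  define A' where "A' = mat\<^sub>r a a (\<lambda>i. if i = a - 1 then 0\<^sub>v a else c i)"
  have A': "A' \<in> carrier_mat a a"
    unfolding A'_def by simp
  have "det A' = 0"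
    unfolding A'_def using A ba by (intro det_row_0) (auto simp: c_def)
  then obtain v where v: "v \<in> carrier_vec a" "v \<noteq> 0\<^sub>v a" "A' *\<^sub>v v = 0\<^sub>v a"
    using det_0_iff_vec_prod_zero[OF A'] by blast
  have "A *\<^sub>v v = 0\<^sub>v b"
  proof (rule eq_vecI)
    fix i assume "i < dim_vec (0\<^sub>v b :: 'a vec)"
    then have i: "i < b" by simp
    have "(A *\<^sub>v v) $ i = (A' *\<^sub>v v) $ i"
      using A i ba by (simp add: A'_def c_def)
    then show "(A *\<^sub>v v) $ i = 0\<^sub>v b $ i"
      using v(3) i ba by simp
  qed (use A in simp)
  with v show ?thesis by blast
qed

lemma inj_mat_dim_le:
  fixes A :: "'a :: field mat"
  assumes "A \<in> carrier_mat b a" "inj_mat A"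
  shows "a \<le> b"
  using wide_mat_kernel_nontrivial[OF assms(1)] assms by (force simp: inj_mat_iff)

lemma inj_mat_one: "inj_mat (1\<^sub>m n :: 'a :: field mat)"
  unfolding inj_mat_def by simp

lemma inj_mat_of_mult:
  fixes A :: "'a :: field mat"
  assumes A: "A \<in> carrier_mat k n" and B: "B \<in> carrier_mat m k" and BA: "inj_mat (B * A)"
  shows "inj_mat A"
  unfolding inj_mat_iff[OF A]
proof (intro ballI impI)
  fix v :: "'a vec" assume v: "v \<in> carrier_vec n" and "A *\<^sub>v v = 0\<^sub>v k"
  then have "(B * A) *\<^sub>v v = 0\<^sub>v m"
    using A B by (simp add: assoc_mult_mat_vec)
  with BA v A B show "v = 0\<^sub>v n"
    by (simp add: inj_mat_iff[of _ m n])
qed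

lemma surj_mat_of_mult:
  fixes A :: "'a :: field mat"
  assumes A: "A \<in> carrier_mat m k" and B: "B \<in> carrier_mat k n" and AB: "surj_mat (A * B)"
  shows "surj_mat A"
  unfolding surj_mat_iff[OF A]
proof
  fix w :: "'a vec" assume "w \<in> carrier_vec m"
  then obtain v where v: "v \<in> carrier_vec n" "(A * B) *\<^sub>v v = w"
    using AB A B by (auto simp: surj_mat_iff[of _ m n])
  then have "A *\<^sub>v (B *\<^sub>v v) = w"
    using A B by (simp add: assoc_mult_mat_vec)
  with v B show "\<exists>u \<in> carrier_vec k. A *\<^sub>v u = w"
    by (intro bexI[of _ "B *\<^sub>v v"]) auto
qed

lemma inj_mat_vec_eq:
  fixes J :: "'a :: field mat"
  assumes J: "J \<in> carrier_mat m d" "inj_mat J"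
    and u: "u \<in> carrier_vec d" and u': "u' \<in> carrier_vec d" and eq: "J *\<^sub>v u = J *\<^sub>v u'"
  shows "u = u'"
proof -
  have "J *\<^sub>v (u - u') = J *\<^sub>v u - J *\<^sub>v u'"
    by (rule mult_minus_distrib_mat_vec[OF J(1) u u'])
  also have "\<dots> = 0\<^sub>v m"
    unfolding eq using J(1) u' by (intro minus_cancel_vec) auto
  finally have diff: "u - u' = 0\<^sub>v d"
    using J u u' by (simp add: inj_mat_iff)
  show "u = u'"
  proof (rule eq_vecI)
    fix i assume "i < dim_vec u'"
    then show "u $ i = u' $ i"
      using arg_cong[OF diff, of "\<lambda>x. x $ i"] u u' by simp
  qed (use u u' in simp)
qed

lemma inj_mat_cancel_left:
  fixes J :: "'a :: field mat"
  assumes J: "J \<in> carrier_mat m d" "inj_mat J"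
    and B: "B \<in> carrier_mat d k" and C: "C \<in> carrier_mat d k" and eq: "J * B = J * C"
  shows "B = C"
proof (rule mat_col_eqI)
  fix j assume "j < dim_col C"
  then have j: "j < k" using C by simp
  have "J *\<^sub>v col B j = col (J * B) j"
    by (rule col_mult2[OF J(1) B j, symmetric])
  also have "\<dots> = J *\<^sub>v col C j"
    unfolding eq by (rule col_mult2[OF J(1) C j])
  finally show "col B j = col C j"
    using inj_mat_vec_eq[OF J] B C j by simp
qed (use B C in simp_all)

lemma factor_through_mat_range:
  fixes J :: "'a :: field mat"
  assumes J: "J \<in> carrier_mat m d" and B: "B \<in> carrier_mat m k"
    and cols: "\<forall>j < k. col B j \<in> mat_range J"
  obtains C where "C \<in> carrier_mat d k" "J * C = B"
proof -
  have "\<forall>j < k. \<exists>u. u \<in> carrier_vec d \<and> J *\<^sub>v u = col B j"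
    using cols J by (auto simp: mat_range_iff)
  then obtain f where f: "\<And>j. j < k \<Longrightarrow> f j \<in> carrier_vec d \<and> J *\<^sub>v f j = col B j"
    by metis
  define C where "C = mat d k (\<lambda>(i, j). f j $ i)"
  have C: "C \<in> carrier_mat d k"
    unfolding C_def by simp
  have "J * C = B"
  proof (rule mat_col_eqI)
    fix j assume "j < dim_col B"
    then have j: "j < k" using B by simp
    have "col C j = f j"
      using f[OF j] j unfolding C_def by (intro eq_vecI) auto
    then show "col (J * C) j = col B j"
      using col_mult2[OF J C j] f[OF j] by simp
  qed (use J B C in simp_all)
  with C that show ?thesis by blast
qed

lemma surj_mat_right_inverse:
  fixes A :: "'a :: field mat"
  assumes A: "A \<in> carrier_mat b a" and surj: "surj_mat A"
  obtains R where "R \<in> carrier_mat a b" "A * R = 1\<^sub>m b"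
proof (rule factor_through_mat_range[OF A one_carrier_mat])
  show "\<forall>j < b. col (1\<^sub>m b) j \<in> mat_range A"
    using surj A unfolding surj_mat_def by auto
qed

lemma surj_mat_dim_le:
  fixes A :: "'a :: field mat"
  assumes A: "A \<in> carrier_mat b a" and "surj_mat A"
  shows "b \<le> a"
proof -
  obtain R where R: "R \<in> carrier_mat a b" "A * R = 1\<^sub>m b"
    using surj_mat_right_inverse assms by blast
  have "inj_mat (A * R)"
    unfolding R(2) by (rule inj_mat_one)
  then have "inj_mat R"
    by (rule inj_mat_of_mult[OF R(1) A])
  with R(1) show ?thesis
    by (rule inj_mat_dim_le)
qed

lemma surj_mat_cancel_right:
  fixes G :: "'a :: field mat"
  assumes G: "G \<in> carrier_mat a n" "surj_mat G"
    and B: "B \<in> carrier_mat k a" and C: "C \<in> carrier_mat k a" and eq: "B * G = C * G"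
  shows "B = C"
proof -
  obtain R where R: "R \<in> carrier_mat n a" "G * R = 1\<^sub>m a"
    using surj_mat_right_inverse G by blast
  have "B = (B * G) * R"
    using B G R by (simp add: assoc_mult_mat[of B k a G n R a])
  also have "\<dots> = C"
    using C G R by (simp add: eq assoc_mult_mat[of C k a G n R a])
  finally show ?thesis .
qed

lemma inj_square_mat_inverse:
  fixes A :: "'a :: field mat"
  assumes A: "A \<in> carrier_mat n n" and "inj_mat A"
  obtains B where "B \<in> carrier_mat n n" "A * B = 1\<^sub>m n" "B * A = 1\<^sub>m n"
proof -
  have "det A \<noteq> 0"
    using assms by (auto simp: det_0_iff_vec_prod_zero[OF A] inj_mat_iff[OF A])
  then have "A \<in> Units (ring_mat TYPE('a) n ())"
    by (rule det_non_zero_imp_unit[OF A])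
  then show ?thesis
    using that unfolding Units_def ring_mat_simps by auto
qed

lemma surj_square_mat_inverse:
  fixes A :: "'a :: field mat"
  assumes A: "A \<in> carrier_mat n n" and "surj_mat A"
  obtains B where "B \<in> carrier_mat n n" "A * B = 1\<^sub>m n" "B * A = 1\<^sub>m n"
proof -
  obtain R where R: "R \<in> carrier_mat n n" "A * R = 1\<^sub>m n"
    using surj_mat_right_inverse[OF assms] by blast
  with mat_mult_left_right_inverse[OF A R] that show ?thesis by blast
qed

lemma mat_range_add:
  fixes F :: "'a :: field mat"
  assumes F: "F \<in> carrier_mat m n" and "u \<in> mat_range F" "w \<in> mat_range F"
  shows "u + w \<in> mat_range F"
  using assms by (auto simp: mat_range_iff[OF F] mult_add_distrib_mat_vec[OF F, symmetric])

lemma mat_range_smult: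
  fixes F :: "'a :: field mat"
  assumes F: "F \<in> carrier_mat m n" and "w \<in> mat_range F"
  shows "c \<cdot>\<^sub>v w \<in> mat_range F"
  using assms by (auto simp: mat_range_iff[OF F] mult_mat_vec[OF F, symmetric])

lemma append_col_mult_vec:
  fixes J :: "'a :: comm_ring_1 mat"
  assumes J: "J \<in> carrier_mat m d" and w: "w \<in> carrier_vec m" and x: "x \<in> carrier_vec (d + 1)"
  shows "(J @\<^sub>c mat_of_cols m [w]) *\<^sub>v x = J *\<^sub>v vec_first x d + (x $ d) \<cdot>\<^sub>v w"
proof -
  let ?C = "mat_of_cols m [w]"
  have C: "?C \<in> carrier_mat m 1"
    using mat_of_cols_carrier(1)[of m "[w]"] by simp
  have "(J @\<^sub>c ?C) *\<^sub>v x = (J @\<^sub>c ?C) *\<^sub>v (vec_first x d @\<^sub>v vec_last x 1)"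
    using x by simp
  also have "\<dots> = J *\<^sub>v vec_first x d + ?C *\<^sub>v vec_last x 1"
    by (rule append_cols_mult_vec[OF J C]) auto
  also have "?C *\<^sub>v vec_last x 1 = (x $ d) \<cdot>\<^sub>v w"
    using w x by (intro eq_vecI) (auto simp: mat_of_cols_def scalar_prod_def vec_last_def mult.commute)
  finally show ?thesis .
qed

lemma add_smult_outside_mat_range_eq_zero:
  fixes J :: "'a :: field mat"
  assumes J: "J \<in> carrier_mat m d" "inj_mat J" and w: "w \<in> carrier_vec m" "w \<notin> mat_range J"
    and u: "u \<in> carrier_vec d" and sum0: "J *\<^sub>v u + t \<cdot>\<^sub>v w = 0\<^sub>v m"
  shows "t = 0" "u = 0\<^sub>v d"
proof -
  have Ju_i: "(J *\<^sub>v u) $ i = - (t * w $ i)" if "i < m" for i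
    using arg_cong[OF sum0, of "\<lambda>v. v $ i"] that J(1) u w(1) by (simp add: eq_neg_iff_add_eq_0)
  show t: "t = 0"
  proof (rule ccontr)
    assume "t \<noteq> 0"
    have "w = J *\<^sub>v ((- inverse t) \<cdot>\<^sub>v u)"
    proof (rule eq_vecI)
      fix i assume "i < dim_vec (J *\<^sub>v ((- inverse t) \<cdot>\<^sub>v u))"
      then have i: "i < m"
        using J(1) by simp
      have "(J *\<^sub>v ((- inverse t) \<cdot>\<^sub>v u)) $ i = - inverse t * (J *\<^sub>v u) $ i"
        using i J(1) by (simp add: mult_mat_vec[OF J(1) u])
      also have "\<dots> = w $ i"
        using Ju_i[OF i] \<open>t \<noteq> 0\<close> by simp
      finally show "w $ i = (J *\<^sub>v ((- inverse t) \<cdot>\<^sub>v u)) $ i" ..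
    qed (use J(1) w(1) in simp)
    moreover have "(- inverse t) \<cdot>\<^sub>v u \<in> carrier_vec d"
      using u by simp
    ultimately show False
      using w(2) J(1) by (auto simp: mat_range_iff)
  qed
  have "J *\<^sub>v u = 0\<^sub>v m"
    using Ju_i t J(1) by (intro eq_vecI) auto
  then show "u = 0\<^sub>v d"
    using J u by (simp add: inj_mat_iff)
qed

lemma inj_mat_append_col:
  fixes J :: "'a :: field mat"
  assumes J: "J \<in> carrier_mat m d" "inj_mat J" and w: "w \<in> carrier_vec m" "w \<notin> mat_range J"
  shows "inj_mat (J @\<^sub>c mat_of_cols m [w])"
proof -
  have J': "J @\<^sub>c mat_of_cols m [w] \<in> carrier_mat m (d + 1)"
    using carrier_append_cols[OF J(1) mat_of_cols_carrier(1)[of m "[w]"]] by simp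
  show ?thesis
    unfolding inj_mat_iff[OF J']
  proof (intro ballI impI)
    fix x :: "'a vec" assume x: "x \<in> carrier_vec (d + 1)"
      and "(J @\<^sub>c mat_of_cols m [w]) *\<^sub>v x = 0\<^sub>v m"
    then have "J *\<^sub>v vec_first x d + (x $ d) \<cdot>\<^sub>v w = 0\<^sub>v m"
      using append_col_mult_vec[OF J(1) w(1) x] by simp
    then have last: "x $ d = 0" and first: "vec_first x d = 0\<^sub>v d"
      using add_smult_outside_mat_range_eq_zero[OF J w vec_first_carrier] by blast+
    show "x = 0\<^sub>v (d + 1)"
    proof (rule eq_vecI)
      fix i assume "i < dim_vec (0\<^sub>v (d + 1) :: 'a vec)"
      then consider "i < d" | "i = d" by fastforce
      then show "x $ i = 0\<^sub>v (d + 1) $ i"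
      proof cases
        case 1
        then show ?thesis
          using arg_cong[OF first, of "\<lambda>v. v $ i"] x unfolding vec_first_def by simp
      next
        case 2
        then show ?thesis
          using last by simp
      qed
    qed (use x in simp)
  qed
qed

lemma mat_range_append_col_subset:
  fixes J :: "'a :: field mat"
  assumes J: "J \<in> carrier_mat m d" and F: "F \<in> carrier_mat m n"
    and range: "mat_range J \<subseteq> mat_range F" and w: "w \<in> mat_range F"
  shows "mat_range (J @\<^sub>c mat_of_cols m [w]) \<subseteq> mat_range F"
proof
  have w': "w \<in> carrier_vec m"
    using w F by (auto simp: mat_range_iff)
  have J': "J @\<^sub>c mat_of_cols m [w] \<in> carrier_mat m (d + 1)"
    using carrier_append_cols[OF J mat_of_cols_carrier(1)[of m "[w]"]] by simp
  fix y assume "y \<in> mat_range (J @\<^sub>c mat_of_cols m [w])"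
  then obtain x where x: "x \<in> carrier_vec (d + 1)" and y: "y = J *\<^sub>v vec_first x d + (x $ d) \<cdot>\<^sub>v w"
    using append_col_mult_vec[OF J w'] by (auto simp: mat_range_iff[OF J'])
  have "J *\<^sub>v vec_first x d \<in> mat_range J"
    unfolding mat_range_iff[OF J] by auto
  with range have "J *\<^sub>v vec_first x d \<in> mat_range F" ..
  then show "y \<in> mat_range F"
    unfolding y using F w by (intro mat_range_add mat_range_smult)
qed

text \<open>Take an injective J with range inside that of F and as many columns as possible: a vector in the
  range of F but not in that of J could be appended to J as a further column.\<close>

lemma mat_range_inj_basis:
  fixes F :: "'a :: field mat"
  assumes F: "F \<in> carrier_mat m n"
  obtains d J where "J \<in> carrier_mat m d" "inj_mat J" "mat_range J = mat_range F"
proof -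
  define P where "P = (\<lambda>(d, J). J \<in> carrier_mat m d \<and> inj_mat J \<and> mat_range J \<subseteq> mat_range F)"
  have "inj_mat (0\<^sub>m m 0 :: 'a mat)"
    unfolding inj_mat_def by (auto dest: carrier_vec_0_eq)
  moreover have "mat_range (0\<^sub>m m 0 :: 'a mat) \<subseteq> mat_range F"
  proof -
    have "0\<^sub>v m \<in> mat_range F"
      using F mat_mult_zero_vec[OF F] unfolding mat_range_iff[OF F] by (intro bexI[of _ "0\<^sub>v n"]) auto
    then show ?thesis
      unfolding mat_range_def by auto
  qed
  ultimately have "P (0, 0\<^sub>m m 0)"
    unfolding P_def by simp
  moreover have "\<forall>p. P p \<longrightarrow> fst p < m + 1"
    unfolding P_def by (auto dest: inj_mat_dim_le)
  ultimately obtain p where p: "P p" and max: "\<And>q. P q \<Longrightarrow> fst q \<le> fst p"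
    using ex_has_greatest_nat[of P _ fst "m + 1"] by metis
  obtain d J where dJ: "p = (d, J)"
    by fastforce
  have J: "J \<in> carrier_mat m d" "inj_mat J" "mat_range J \<subseteq> mat_range F"
    using p unfolding P_def dJ by auto
  have "mat_range F \<subseteq> mat_range J"
  proof
    fix w assume w: "w \<in> mat_range F"
    show "w \<in> mat_range J"
    proof (rule ccontr)
      assume "w \<notin> mat_range J"
      moreover have "w \<in> carrier_vec m"
        using w F by (auto simp: mat_range_iff)
      ultimately have "P (d + 1, J @\<^sub>c mat_of_cols m [w])"
        unfolding P_def
        using carrier_append_cols[OF J(1) mat_of_cols_carrier(1)[of m "[w]"]]
          inj_mat_append_col[OF J(1,2)] mat_range_append_col_subset[OF J(1) F J(3) w]
        by simp
      with max[of "(d + 1, _)"] show False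
        unfolding dJ by fastforce
    qed
  qed
  with J that show ?thesis by blast
qed

lemma col_in_mat_range:
  fixes A :: "'a :: field mat"
  assumes A: "A \<in> carrier_mat m n" and j: "j < n"
  shows "col A j \<in> mat_range A"
proof -
  have "col A j = col (A * 1\<^sub>m n) j"
    using A by simp
  also have "\<dots> = A *\<^sub>v unit_vec n j"
    unfolding col_mult2[OF A one_carrier_mat j] using j by simp
  finally show ?thesis
    using A by (auto simp: mat_range_iff)
qed

lemma factor_through_inj_mat:
  fixes G :: "'a :: field mat"
  assumes G: "G \<in> carrier_mat m a" "inj_mat G" and H: "H \<in> carrier_mat m b"
    and J: "J \<in> carrier_mat m c" and Q: "Q \<in> carrier_mat c (a + b)" and JQ: "J * Q = G @\<^sub>c H"
    and c_le: "c \<le> a"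
  obtains U where "U \<in> carrier_mat a b" "G * U = H"
proof -
  define Q0 Q1 where "Q0 = Q * (1\<^sub>m a @\<^sub>r 0\<^sub>m b a)" and "Q1 = Q * (0\<^sub>m a b @\<^sub>r 1\<^sub>m b)"
  have I0: "1\<^sub>m a @\<^sub>r 0\<^sub>m b a \<in> carrier_mat (a + b) a" and I1: "0\<^sub>m a b @\<^sub>r 1\<^sub>m b \<in> carrier_mat (a + b) b"
    by auto
  have Q0c: "Q0 \<in> carrier_mat c a" and Q1c: "Q1 \<in> carrier_mat c b"
    unfolding Q0_def Q1_def using Q I0 I1 by auto
  have JQ0: "J * Q0 = G" and JQ1: "J * Q1 = H"
    unfolding Q0_def Q1_def assoc_mult_mat[OF J Q I0, symmetric] assoc_mult_mat[OF J Q I1, symmetric] JQ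
    by (fact append_cols_mult_proj[OF G(1) H])+
  have "inj_mat Q0"
    using inj_mat_of_mult[OF Q0c J] JQ0 G(2) by simp
  then have "c = a"
    using inj_mat_dim_le[OF Q0c] c_le by simp
  then have Q0a: "Q0 \<in> carrier_mat a a" and Q1a: "Q1 \<in> carrier_mat a b" and Ja: "J \<in> carrier_mat m a"
    using Q0c Q1c J by simp_all
  obtain V where V: "V \<in> carrier_mat a a" "Q0 * V = 1\<^sub>m a"
    using inj_square_mat_inverse[OF Q0a \<open>inj_mat Q0\<close>] by blast
  have "G * (V * Q1) = J * (Q0 * (V * Q1))"
    unfolding JQ0[symmetric] by (rule assoc_mult_mat[OF Ja Q0a mult_carrier_mat[OF V(1) Q1a]])
  also have "\<dots> = H"
    unfolding assoc_mult_mat[OF Q0a V(1) Q1a, symmetric] V(2) JQ1[symmetric] using Q1a by simp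
  finally show ?thesis
    by (rule that[OF mult_carrier_mat[OF V(1) Q1a]])
qed

lemma factor_through_surj_mat:
  fixes G :: "'a :: field mat"
  assumes G: "G \<in> carrier_mat a n" "surj_mat G" and H: "H \<in> carrier_mat b n"
    and J: "J \<in> carrier_mat (a + b) c" and Q: "Q \<in> carrier_mat c n" and JQ: "J * Q = G @\<^sub>r H"
    and c_le: "c \<le> a"
  obtains U where "U \<in> carrier_mat b a" "U * G = H"
proof -
  define R0 R1 where "R0 = (1\<^sub>m a @\<^sub>c 0\<^sub>m a b) * J" and "R1 = (0\<^sub>m b a @\<^sub>c 1\<^sub>m b) * J"
  have P0: "1\<^sub>m a @\<^sub>c 0\<^sub>m a b \<in> carrier_mat a (a + b)" and P1: "0\<^sub>m b a @\<^sub>c 1\<^sub>m b \<in> carrier_mat b (a + b)"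
    by auto
  have R0c: "R0 \<in> carrier_mat a c" and R1c: "R1 \<in> carrier_mat b c"
    unfolding R0_def R1_def by (fact mult_carrier_mat[OF P0 J] mult_carrier_mat[OF P1 J])+
  have R0Q: "R0 * Q = G" and R1Q: "R1 * Q = H"
    unfolding R0_def R1_def assoc_mult_mat[OF P0 J Q] assoc_mult_mat[OF P1 J Q] JQ
    by (fact proj_mult_append_rows[OF G(1) H])+
  have "surj_mat R0"
    using surj_mat_of_mult[OF R0c Q] R0Q G(2) by simp
  then have "c = a"
    using surj_mat_dim_le[OF R0c] c_le by simp
  then have R0a: "R0 \<in> carrier_mat a a" and R1a: "R1 \<in> carrier_mat b a" and Qa: "Q \<in> carrier_mat a n"
    using R0c R1c Q by simp_all
  obtain V where V: "V \<in> carrier_mat a a" "V * R0 = 1\<^sub>m a"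
    using surj_square_mat_inverse[OF R0a \<open>surj_mat R0\<close>] by blast
  have "(R1 * V) * G = ((R1 * V) * R0) * Q"
    unfolding R0Q[symmetric] by (rule assoc_mult_mat[OF mult_carrier_mat[OF R1a V(1)] R0a Qa, symmetric])
  also have "\<dots> = H"
    unfolding assoc_mult_mat[OF R1a V(1) R0a] V(2) R1Q[symmetric] using R1a by simp
  finally show ?thesis
    by (rule that[OF mult_carrier_mat[OF R1a V(1)]])
qed

lemma surj_mat_of_range_factor:
  fixes J :: "'a :: field mat"
  assumes J: "J \<in> carrier_mat m d" "inj_mat J" and Q: "Q \<in> carrier_mat d n" "J * Q = F"
    and range: "mat_range J \<subseteq> mat_range F"
  shows "surj_mat Q"
  unfolding surj_mat_iff[OF Q(1)]
proof
  fix w :: "'a vec" assume w: "w \<in> carrier_vec d"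
  then have "J *\<^sub>v w \<in> mat_range J"
    unfolding mat_range_iff[OF J(1)] by blast
  with range have "J *\<^sub>v w \<in> mat_range F" ..
  then obtain v where v: "v \<in> carrier_vec n" "F *\<^sub>v v = J *\<^sub>v w"
    unfolding mat_range_def using J(1) Q by auto
  have "J *\<^sub>v (Q *\<^sub>v v) = J *\<^sub>v w"
    unfolding assoc_mult_mat_vec[OF J(1) Q(1) v(1), symmetric] Q(2) by (fact v(2))
  then have "Q *\<^sub>v v = w"
    using inj_mat_vec_eq[OF J] Q(1) v(1) w by simp
  with v(1) show "\<exists>v \<in> carrier_vec n. Q *\<^sub>v v = w" ..
qed

section \<open>Modules, homomorphisms and direct sums\<close>

lemma is_moduleD:
  assumes "is_module sc M"
  shows "ract M x \<in> carrier_mat (rdim M) (rdim M)" "ract M 1 = 1\<^sub>m (rdim M)"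
    "ract M (x * y) = ract M x * ract M y" "ract M (x + y) = ract M x + ract M y"
    "ract M (sc c x) = c \<cdot>\<^sub>m ract M x"
  using assms unfolding is_module_def by auto

lemma is_homD:
  assumes "is_hom M N F"
  shows "F \<in> carrier_mat (rdim N) (rdim M)" "F * ract M x = ract N x * F"
  using assms unfolding is_hom_def by auto

lemma is_mono_iff_inj_mat:
  assumes "is_hom M N F"
  shows "is_mono M N F \<longleftrightarrow> inj_mat F"
  unfolding is_mono_def inj_mat_iff[OF is_homD(1)[OF assms]] ..

lemma is_epi_iff_surj_mat:
  assumes "is_hom M N F"
  shows "is_epi M N F \<longleftrightarrow> surj_mat F"
  unfolding is_epi_def surj_mat_iff[OF is_homD(1)[OF assms]] ..

lemma mono_dim_le: "is_hom T M G \<Longrightarrow> is_mono T M G \<Longrightarrow> rdim T \<le> rdim M"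
  using inj_mat_dim_le is_homD(1) is_mono_iff_inj_mat by blast

lemma epi_dim_le: "is_hom M T G \<Longrightarrow> is_epi M T G \<Longrightarrow> rdim T \<le> rdim M"
  using surj_mat_dim_le is_homD(1) is_epi_iff_surj_mat by blast

lemma is_hom_one:
  assumes "is_module sc M"
  shows "is_hom M M (1\<^sub>m (rdim M))"
  unfolding is_hom_def
proof (intro conjI allI)
  fix x show "1\<^sub>m (rdim M) * ract M x = ract M x * 1\<^sub>m (rdim M)"
    using is_moduleD(1)[OF assms, of x] by simp
qed simp

lemma is_hom_zero:
  assumes "is_module sc M" "is_module sc N"
  shows "is_hom M N (0\<^sub>m (rdim N) (rdim M))"
  unfolding is_hom_def
proof (intro conjI allI)
  fix x show "0\<^sub>m (rdim N) (rdim M) * ract M x = ract N x * 0\<^sub>m (rdim N) (rdim M)"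
    using is_moduleD(1)[OF assms(1), of x] is_moduleD(1)[OF assms(2), of x] by simp
qed simp

definition zero_rep :: "('k :: field, 'l) rep" where
  "zero_rep = (0, \<lambda>_. 1\<^sub>m 0)"

lemma zero_rep_module: "is_module sc zero_rep"
  unfolding is_module_def zero_rep_def by (auto intro!: eq_matI)

lemma zero_rep_mono:
  assumes "is_module sc M"
  shows "is_hom zero_rep M (0\<^sub>m (rdim M) 0)" "is_mono zero_rep M (0\<^sub>m (rdim M) 0)"
  using is_hom_zero[OF zero_rep_module assms]
  unfolding is_mono_def zero_rep_def by (auto dest: carrier_vec_0_eq)

lemma zero_rep_epi:
  assumes "is_module sc M"
  shows "is_hom M zero_rep (0\<^sub>m 0 (rdim M))" "is_epi M zero_rep (0\<^sub>m 0 (rdim M))"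
  using is_hom_zero[OF assms zero_rep_module]
  unfolding is_epi_def zero_rep_def by (auto dest!: carrier_vec_0_eq) (metis zero_carrier_vec)

definition dsum :: "('k :: field, 'l) rep \<Rightarrow> ('k, 'l) rep \<Rightarrow> ('k, 'l) rep" where
  "dsum X Y = (rdim X + rdim Y, \<lambda>x. block_diag (ract X x) (ract Y x))"

lemma dsum_module:
  assumes X: "is_module sc X" and Y: "is_module sc Y"
  shows "is_module sc (dsum X Y)"
  unfolding is_module_def dsum_def fst_conv snd_conv
  using is_moduleD[OF X] is_moduleD[OF Y]
  by (simp add: block_diag_one
      block_diag_mult[OF is_moduleD(1)[OF X] is_moduleD(1)[OF Y] is_moduleD(1)[OF X] is_moduleD(1)[OF Y]]
      block_diag_add[OF is_moduleD(1)[OF X] is_moduleD(1)[OF Y] is_moduleD(1)[OF X] is_moduleD(1)[OF Y]]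
      block_diag_smult[OF is_moduleD(1)[OF X] is_moduleD(1)[OF Y]])

lemma hom_from_dsum:
  assumes X: "is_module sc X" and Y: "is_module sc Y" and M: "is_module sc M"
    and G: "is_hom X M G" and H: "is_hom Y M H"
  shows "is_hom (dsum X Y) M (G @\<^sub>c H)"
  unfolding is_hom_def dsum_def fst_conv snd_conv
  using is_homD[OF G] is_homD[OF H] is_moduleD(1)[OF X] is_moduleD(1)[OF Y] is_moduleD(1)[OF M]
  by (simp add: append_cols_mult_block_diag[OF is_homD(1)[OF G] is_homD(1)[OF H]
      is_moduleD(1)[OF X] is_moduleD(1)[OF Y]] mult_append_cols[OF is_moduleD(1)[OF M]
      is_homD(1)[OF G] is_homD(1)[OF H]])

lemma hom_to_dsum:
  assumes X: "is_module sc X" and Y: "is_module sc Y" and M: "is_module sc M"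
    and G: "is_hom M X G" and H: "is_hom M Y H"
  shows "is_hom M (dsum X Y) (G @\<^sub>r H)"
  unfolding is_hom_def dsum_def fst_conv snd_conv
  using is_homD[OF G] is_homD[OF H] is_moduleD(1)[OF X] is_moduleD(1)[OF Y] is_moduleD(1)[OF M]
  by (simp add: block_diag_mult_append_rows[OF is_homD(1)[OF G] is_homD(1)[OF H]
      is_moduleD(1)[OF X] is_moduleD(1)[OF Y]] append_rows_mult[OF is_homD(1)[OF G]
      is_homD(1)[OF H] is_moduleD(1)[OF M]])

lemma dsum_short_exact:
  fixes X Y :: "('k :: field, 'l :: ring_1) rep"
  assumes X: "is_module sc X" and Y: "is_module sc Y"
  shows "short_exact X (dsum X Y) Y (1\<^sub>m (rdim X) @\<^sub>r 0\<^sub>m (rdim Y) (rdim X))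
    (0\<^sub>m (rdim Y) (rdim X) @\<^sub>c 1\<^sub>m (rdim Y))"
proof -
  define a b where "a = rdim X" and "b = rdim Y"
  define I P :: "'k mat" where "I = 1\<^sub>m a @\<^sub>r 0\<^sub>m b a" and "P = 0\<^sub>m b a @\<^sub>c 1\<^sub>m b"
  have "is_hom X X (1\<^sub>m a)" "is_hom X Y (0\<^sub>m b a)" "is_hom Y X (0\<^sub>m a b)" "is_hom Y Y (1\<^sub>m b)"
    unfolding a_def b_def using X Y by (auto intro: is_hom_one is_hom_zero)
  then have homs: "is_hom X (dsum X Y) I" "is_hom (dsum X Y) Y P"
    unfolding I_def P_def using X Y by (auto intro: hom_to_dsum hom_from_dsum)
  have Iv: "I *\<^sub>v v = v @\<^sub>v 0\<^sub>v b" if "v \<in> carrier_vec a" for v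
    unfolding I_def using that by (subst mat_mult_append) auto
  have Pv: "P *\<^sub>v (u @\<^sub>v w) = w" if "u \<in> carrier_vec a" "w \<in> carrier_vec b" for u w
    unfolding P_def using that by (subst append_cols_mult_vec) auto
  have "P * I = 0\<^sub>m b a"
    unfolding P_def I_def by (subst append_cols_mult_append_rows) auto
  moreover have "is_mono X (dsum X Y) I"
    unfolding is_mono_def dsum_def fst_conv a_def[symmetric] b_def[symmetric]
  proof (intro ballI impI)
    fix v :: "'k vec" assume v: "v \<in> carrier_vec a" and "I *\<^sub>v v = 0\<^sub>v (a + b)"
    then have "v @\<^sub>v 0\<^sub>v b = 0\<^sub>v a @\<^sub>v 0\<^sub>v b"
      using Iv zero_vec_append by simp
    then show "v = 0\<^sub>v a"
      using v by (simp add: append_vec_eq)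
  qed
  moreover have "is_epi (dsum X Y) Y P"
    unfolding is_epi_def dsum_def using Pv
    by (auto simp: a_def b_def intro!: bexI[of _ "0\<^sub>v a @\<^sub>v _"])
  moreover have "\<exists>v \<in> carrier_vec a. I *\<^sub>v v = w"
    if "w \<in> carrier_vec (a + b)" "P *\<^sub>v w = 0\<^sub>v b" for w
  proof -
    have w: "w = vec_first w a @\<^sub>v vec_last w b"
      using that(1) by simp
    then have "vec_last w b = 0\<^sub>v b"
      using that(2) Pv[of "vec_first w a" "vec_last w b"] by simp
    then show ?thesis
      using Iv[of "vec_first w a"] w by (intro bexI[of _ "vec_first w a"]) auto
  qed
  ultimately show ?thesis
    using homs unfolding short_exact_def I_def P_def a_def b_def dsum_def by auto
qed

lemma hom_factor_through_mono:
  assumes T: "is_module sc T" and T': "is_module sc T'" and M: "is_module sc M"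
    and G: "is_hom T M G" "is_mono T M G" and H: "is_hom T' M H"
    and U: "U \<in> carrier_mat (rdim T) (rdim T')" and GU: "G * U = H"
  shows "is_hom T' T U"
  unfolding is_hom_def
proof (intro conjI allI)
  show "U \<in> carrier_mat (rdim T) (rdim T')" by (fact U)
  fix x
  have Gc: "G \<in> carrier_mat (rdim M) (rdim T)"
    by (rule is_homD(1)[OF G(1)])
  note Tx = is_moduleD(1)[OF T, of x] and T'x = is_moduleD(1)[OF T', of x]
    and Mx = is_moduleD(1)[OF M, of x]
  have "G * (U * ract T' x) = H * ract T' x"
    unfolding assoc_mult_mat[OF Gc U T'x, symmetric] GU ..
  also have "\<dots> = ract M x * H"
    by (rule is_homD(2)[OF H])
  also have "\<dots> = (ract M x * G) * U"
    unfolding GU[symmetric] by (rule assoc_mult_mat[OF Mx Gc U, symmetric])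
  also have "\<dots> = G * (ract T x * U)"
    unfolding is_homD(2)[OF G(1), symmetric] by (rule assoc_mult_mat[OF Gc Tx U])
  finally have "G * (U * ract T' x) = G * (ract T x * U)" .
  moreover have "inj_mat G"
    using G is_mono_iff_inj_mat by blast
  ultimately show "U * ract T' x = ract T x * U"
    using inj_mat_cancel_left[OF Gc _ mult_carrier_mat[OF U T'x] mult_carrier_mat[OF Tx U]] by blast
qed

lemma hom_factor_through_epi:
  assumes T: "is_module sc T" and T': "is_module sc T'" and M: "is_module sc M"
    and G: "is_hom M T G" "is_epi M T G" and H: "is_hom M T' H"
    and U: "U \<in> carrier_mat (rdim T') (rdim T)" and UG: "U * G = H"
  shows "is_hom T T' U"
  unfolding is_hom_def
proof (intro conjI allI)
  show "U \<in> carrier_mat (rdim T') (rdim T)" by (fact U)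
  fix x
  have Gc: "G \<in> carrier_mat (rdim T) (rdim M)"
    by (rule is_homD(1)[OF G(1)])
  note Tx = is_moduleD(1)[OF T, of x] and T'x = is_moduleD(1)[OF T', of x]
    and Mx = is_moduleD(1)[OF M, of x]
  have "(U * ract T x) * G = U * (G * ract M x)"
    unfolding is_homD(2)[OF G(1)] by (rule assoc_mult_mat[OF U Tx Gc])
  also have "\<dots> = H * ract M x"
    unfolding assoc_mult_mat[OF U Gc Mx, symmetric] UG ..
  also have "\<dots> = ract T' x * H"
    by (rule is_homD(2)[OF H])
  also have "\<dots> = (ract T' x * U) * G"
    unfolding UG[symmetric] by (rule assoc_mult_mat[OF T'x U Gc, symmetric])
  finally have "(U * ract T x) * G = (ract T' x * U) * G" .
  moreover have "surj_mat G"
    using G is_epi_iff_surj_mat by blast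
  ultimately show "U * ract T x = ract T' x * U"
    using surj_mat_cancel_right[OF Gc _ mult_carrier_mat[OF U Tx] mult_carrier_mat[OF T'x U]] by blast
qed

lemma submodule_of_inj_intertwiner:
  assumes M: "is_module sc M" and J: "J \<in> carrier_mat (rdim M) d" "inj_mat J"
    and A: "\<And>x. A x \<in> carrier_mat d d" and JA: "\<And>x. J * A x = ract M x * J"
  shows "is_module sc (d, A)" "is_hom (d, A) M J" "is_mono (d, A) M J"
proof -
  note M_carrier = is_moduleD(1)[OF M]
  note cancel = inj_mat_cancel_left[OF J]
  show "is_module sc (d, A)"
    unfolding is_module_def fst_conv snd_conv
  proof (intro conjI allI)
    show "A 1 = 1\<^sub>m d"
      by (rule cancel[OF A one_carrier_mat]) (use J(1) in \<open>simp add: JA is_moduleD(2)[OF M]\<close>)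
  next
    fix x y
    have "J * A (x * y) = ract M x * (ract M y * J)"
      unfolding JA is_moduleD(3)[OF M] by (rule assoc_mult_mat[OF M_carrier M_carrier J(1)])
    also have "\<dots> = J * (A x * A y)"
      unfolding JA[symmetric] assoc_mult_mat[OF M_carrier J(1) A, symmetric]
      by (rule assoc_mult_mat[OF J(1) A A])
    finally show "A (x * y) = A x * A y"
      by (rule cancel[OF A mult_carrier_mat[OF A A]])
  next
    fix x y
    have "J * A (x + y) = J * (A x + A y)"
      unfolding JA is_moduleD(4)[OF M] add_mult_distrib_mat[OF M_carrier M_carrier J(1)]
        mult_add_distrib_mat[OF J(1) A A] ..
    then show "A (x + y) = A x + A y"
      by (rule cancel[OF A add_carrier_mat[OF A]])
  next
    fix c x
    have "J * A (sc c x) = J * (c \<cdot>\<^sub>m A x)"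
      unfolding JA is_moduleD(5)[OF M] mult_smult_assoc_mat[OF M_carrier J(1)]
        mult_smult_distrib[OF J(1) A] ..
    then show "A (sc c x) = c \<cdot>\<^sub>m A x"
      by (rule cancel[OF A smult_carrier_mat[OF A]])
  qed (rule A)
  show hom: "is_hom (d, A) M J"
    unfolding is_hom_def using J(1) JA by simp
  show "is_mono (d, A) M J"
    unfolding is_mono_iff_inj_mat[OF hom] by (rule J(2))
qed

lemma hom_mat_range_invariant:
  assumes X: "is_module sc X" and M: "is_module sc M" and F: "is_hom X M F"
    and w: "w \<in> mat_range F"
  shows "ract M x *\<^sub>v w \<in> mat_range F"
proof -
  have Fc: "F \<in> carrier_mat (rdim M) (rdim X)"
    by (rule is_homD(1)[OF F])
  obtain v where v: "v \<in> carrier_vec (rdim X)" "w = F *\<^sub>v v"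
    using w by (auto simp: mat_range_iff[OF Fc])
  have "ract M x *\<^sub>v w = (F * ract X x) *\<^sub>v v"
    unfolding v(2) is_homD(2)[OF F] by (rule assoc_mult_mat_vec[OF is_moduleD(1)[OF M] Fc v(1), symmetric])
  also have "\<dots> = F *\<^sub>v (ract X x *\<^sub>v v)"
    by (rule assoc_mult_mat_vec[OF Fc is_moduleD(1)[OF X] v(1)])
  finally have "ract M x *\<^sub>v w = F *\<^sub>v (ract X x *\<^sub>v v)" .
  moreover have "ract X x *\<^sub>v v \<in> carrier_vec (rdim X)"
    using v(1) is_moduleD(1)[OF X, of x] by simp
  ultimately show ?thesis
    unfolding mat_range_iff[OF Fc] by (metis)
qed

lemma hom_range_action:
  assumes X: "is_module sc X" and M: "is_module sc M" and F: "is_hom X M F"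
    and J: "J \<in> carrier_mat (rdim M) d" and range: "mat_range J = mat_range F"
  obtains A where "\<And>x. A x \<in> carrier_mat d d" "\<And>x. J * A x = ract M x * J"
proof -
  have "\<exists>A. A \<in> carrier_mat d d \<and> J * A = ract M x * J" for x
  proof -
    note Mx = is_moduleD(1)[OF M, of x]
    have "col (ract M x * J) j \<in> mat_range J" if j: "j < d" for j
    proof -
      have "col J j \<in> mat_range F"
        using col_in_mat_range[OF J j] range by simp
      then have "ract M x *\<^sub>v col J j \<in> mat_range F"
        by (rule hom_mat_range_invariant[OF X M F])
      then show ?thesis
        unfolding col_mult2[OF Mx J j] range .
    qed
    then show ?thesis
      using factor_through_mat_range[OF J mult_carrier_mat[OF Mx J]] by metis
  qed
  then show ?thesis
    using that by metis
qed

lemma hom_image_factorization: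
  assumes X: "is_module sc X" and M: "is_module sc M" and F: "is_hom X M F"
  obtains Im Q J where "is_module sc Im" "is_hom X Im Q" "is_epi X Im Q"
    "is_hom Im M J" "is_mono Im M J" "J * Q = F"
proof -
  have Fc: "F \<in> carrier_mat (rdim M) (rdim X)"
    by (rule is_homD(1)[OF F])
  obtain d J where J: "J \<in> carrier_mat (rdim M) d" "inj_mat J" and range: "mat_range J = mat_range F"
    using mat_range_inj_basis[OF Fc] by blast
  obtain A where A: "\<And>x. A x \<in> carrier_mat d d" "\<And>x. J * A x = ract M x * J"
    using hom_range_action[OF X M F J(1) range] by blast
  note Im = submodule_of_inj_intertwiner[OF M J A]
  obtain Q where Q: "Q \<in> carrier_mat d (rdim X)" "J * Q = F"
    using factor_through_mat_range[OF J(1) Fc] col_in_mat_range[OF Fc] range by metis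
  have homQ: "is_hom X (d, A) Q"
    by (rule hom_factor_through_mono[OF Im(1) X M Im(2,3) F]) (use Q in simp_all)
  moreover have "is_epi X (d, A) Q"
    unfolding is_epi_iff_surj_mat[OF homQ] using surj_mat_of_range_factor[OF J Q] range by simp
  ultimately show ?thesis
    using Im Q(2) that by blast
qed

section \<open>Approximations by Serre subcategories\<close>

lemma dsum_in_ext_closed:
  assumes "ext_closed sc S" "is_module sc X" "is_module sc Y" "X \<in> S" "Y \<in> S"
  shows "dsum X Y \<in> S"
  using assms dsum_module dsum_short_exact unfolding ext_closed_def by blast

lemma zero_rep_in_sub_closed:
  assumes "subcat sc S" "sub_closed sc S"
  shows "zero_rep \<in> S"
proof -
  obtain Y where "Y \<in> S" "is_module sc Y"
    using assms(1) unfolding subcat_def by blast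
  then show ?thesis
    using assms(2) zero_rep_module zero_rep_mono unfolding sub_closed_def by blast
qed

lemma ex_maximal_rdim:
  fixes P :: "('k, 'l) rep \<Rightarrow> 'k mat \<Rightarrow> bool"
  assumes "P T G" and bound: "\<And>T G. P T G \<Longrightarrow> rdim T \<le> n"
  obtains T0 G0 where "P T0 G0" "\<And>T G. P T G \<Longrightarrow> rdim T \<le> rdim T0"
proof -
  have "case_prod P (T, G)"
    using assms(1) by simp
  moreover have "\<forall>p. case_prod P p \<longrightarrow> rdim (fst p) < n + 1"
    using bound by (auto simp: less_Suc_eq_le)
  ultimately obtain p where p: "case_prod P p" and max: "\<And>q. case_prod P q \<Longrightarrow> rdim (fst q) \<le> rdim (fst p)"
    using ex_has_greatest_nat[of "case_prod P" "(T, G)" "\<lambda>p. rdim (fst p)" "n + 1"] by blast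
  show ?thesis
  proof (rule that)
    show "P (fst p) (snd p)"
      using p unfolding case_prod_beta .
    show "rdim T \<le> rdim (fst p)" if "P T G" for T G
      using max[of "(T, G)"] that by simp
  qed
qed

lemma maximal_submodule_is_right_approx:
  assumes S: "\<And>T. T \<in> S \<Longrightarrow> is_module sc T" "ext_closed sc S" "quot_closed sc S"
    and M: "is_module sc M" and T0: "T0 \<in> S" and G: "is_hom T0 M G" "is_mono T0 M G"
    and max: "\<And>T G'. T \<in> S \<Longrightarrow> is_hom T M G' \<Longrightarrow> is_mono T M G' \<Longrightarrow> rdim T \<le> rdim T0"
    and T1: "T1 \<in> S" and H: "is_hom T1 M H"
  shows "\<exists>U. is_hom T1 T0 U \<and> G * U = H"
proof -
  note T0m = S(1)[OF T0] and T1m = S(1)[OF T1]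
  have D: "dsum T0 T1 \<in> S" "is_module sc (dsum T0 T1)"
    using dsum_in_ext_closed[OF S(2) T0m T1m T0 T1] dsum_module[OF T0m T1m] by blast+
  obtain Im Q J where Im: "is_module sc Im" and Q: "is_hom (dsum T0 T1) Im Q" "is_epi (dsum T0 T1) Im Q"
    and J: "is_hom Im M J" "is_mono Im M J" and JQ: "J * Q = G @\<^sub>c H"
    using hom_image_factorization[OF D(2) M hom_from_dsum[OF T0m T1m M G(1) H]] by blast
  have "Im \<in> S"
    using S(3) Im D(1) Q unfolding quot_closed_def by blast
  obtain U where U: "U \<in> carrier_mat (rdim T0) (rdim T1)" "G * U = H"
  proof (rule factor_through_inj_mat[OF is_homD(1)[OF G(1)] _ is_homD(1)[OF H] is_homD(1)[OF J(1)] _ JQ])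
    show "inj_mat G"
      using G is_mono_iff_inj_mat by blast
    show "Q \<in> carrier_mat (rdim Im) (rdim T0 + rdim T1)"
      using is_homD(1)[OF Q(1)] by (simp add: dsum_def)
    show "rdim Im \<le> rdim T0"
      by (rule max[OF \<open>Im \<in> S\<close> J])
  qed
  then show ?thesis
    using hom_factor_through_mono[OF T0m T1m M G H] by blast
qed

lemma maximal_quotient_is_left_approx:
  assumes S: "\<And>T. T \<in> S \<Longrightarrow> is_module sc T" "ext_closed sc S" "sub_closed sc S"
    and M: "is_module sc M" and T0: "T0 \<in> S" and G: "is_hom M T0 G" "is_epi M T0 G"
    and max: "\<And>T G'. T \<in> S \<Longrightarrow> is_hom M T G' \<Longrightarrow> is_epi M T G' \<Longrightarrow> rdim T \<le> rdim T0"
    and T1: "T1 \<in> S" and H: "is_hom M T1 H"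
  shows "\<exists>U. is_hom T0 T1 U \<and> U * G = H"
proof -
  note T0m = S(1)[OF T0] and T1m = S(1)[OF T1]
  have D: "dsum T0 T1 \<in> S" "is_module sc (dsum T0 T1)"
    using dsum_in_ext_closed[OF S(2) T0m T1m T0 T1] dsum_module[OF T0m T1m] by blast+
  obtain Im Q J where Im: "is_module sc Im" and Q: "is_hom M Im Q" "is_epi M Im Q"
    and J: "is_hom Im (dsum T0 T1) J" "is_mono Im (dsum T0 T1) J" and JQ: "J * Q = G @\<^sub>r H"
    using hom_image_factorization[OF M D(2) hom_to_dsum[OF T0m T1m M G(1) H]] by blast
  have "Im \<in> S"
    using S(3) Im D(1) J unfolding sub_closed_def by blast
  obtain U where U: "U \<in> carrier_mat (rdim T1) (rdim T0)" "U * G = H"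
  proof (rule factor_through_surj_mat[OF is_homD(1)[OF G(1)] _ is_homD(1)[OF H] _ is_homD(1)[OF Q(1)] JQ])
    show "surj_mat G"
      using G is_epi_iff_surj_mat by blast
    show "J \<in> carrier_mat (rdim T0 + rdim T1) (rdim Im)"
      using is_homD(1)[OF J(1)] by (simp add: dsum_def)
    show "rdim Im \<le> rdim T0"
      by (rule max[OF \<open>Im \<in> S\<close> Q])
  qed
  then show ?thesis
    using hom_factor_through_epi[OF T0m T1m M G H] by blast
qed

lemma serre_subcatD:
  assumes "serre_subcat sc S"
  shows "subcat sc S" "\<And>M. M \<in> S \<Longrightarrow> is_module sc M" "ext_closed sc S" "sub_closed sc S"
    "quot_closed sc S"
  using assms unfolding serre_subcat_def subcat_def by auto

lemma serre_subcat_has_right_approx: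
  assumes S: "serre_subcat sc S" and M: "is_module sc M"
  shows "has_right_approx S M"
proof -
  note S' = serre_subcatD[OF S]
  obtain T0 G where T0: "T0 \<in> S" "is_hom T0 M G" "is_mono T0 M G"
    and max: "\<And>T G'. T \<in> S \<and> is_hom T M G' \<and> is_mono T M G' \<Longrightarrow> rdim T \<le> rdim T0"
  proof (rule ex_maximal_rdim[of "\<lambda>T G. T \<in> S \<and> is_hom T M G \<and> is_mono T M G"])
    show "zero_rep \<in> S \<and> is_hom zero_rep M (0\<^sub>m (rdim M) 0) \<and> is_mono zero_rep M (0\<^sub>m (rdim M) 0)"
      using zero_rep_in_sub_closed[OF S'(1,4)] zero_rep_mono[OF M] by simp
  qed (use mono_dim_le in blast)+
  with maximal_submodule_is_right_approx[OF S'(2,3,5) M T0] show ?thesis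
    unfolding has_right_approx_def by blast
qed

lemma serre_subcat_has_left_approx:
  assumes S: "serre_subcat sc S" and M: "is_module sc M"
  shows "has_left_approx S M"
proof -
  note S' = serre_subcatD[OF S]
  obtain T0 G where T0: "T0 \<in> S" "is_hom M T0 G" "is_epi M T0 G"
    and max: "\<And>T G'. T \<in> S \<and> is_hom M T G' \<and> is_epi M T G' \<Longrightarrow> rdim T \<le> rdim T0"
  proof (rule ex_maximal_rdim[of "\<lambda>T G. T \<in> S \<and> is_hom M T G \<and> is_epi M T G"])
    show "zero_rep \<in> S \<and> is_hom M zero_rep (0\<^sub>m 0 (rdim M)) \<and> is_epi M zero_rep (0\<^sub>m 0 (rdim M))"
      using zero_rep_in_sub_closed[OF S'(1,4)] zero_rep_epi[OF M] by simp
  qed (use epi_dim_le in blast)+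
  with maximal_quotient_is_left_approx[OF S'(2,3,4) M T0] show ?thesis
    unfolding has_left_approx_def by blast
qed

lemma ker_closed_if_sub_closed: "sub_closed sc S \<Longrightarrow> ker_closed sc S"
  unfolding sub_closed_def ker_closed_def is_kernel_def by blast

lemma coker_closed_if_quot_closed: "quot_closed sc S \<Longrightarrow> coker_closed sc S"
  unfolding quot_closed_def coker_closed_def is_cokernel_def by blast

lemma W_L_eq_if_sub_closed: "sub_closed sc T \<Longrightarrow> W_L sc T = T"
  unfolding W_L_def sub_closed_def is_kernel_def by blast

lemma W_R_eq_if_quot_closed: "quot_closed sc F \<Longrightarrow> W_R sc F = F"
  unfolding W_R_def quot_closed_def is_cokernel_def by blast

theorem corollary3p8:
  fixes sc :: "'k::field \<Rightarrow> 'l::ring_1 \<Rightarrow> 'l"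
    and S :: "('k, 'l) subcat"
  assumes "fd_algebra sc"
    and "basic_algebra TYPE('l)"
    and "serre_subcat sc S"
  shows "left_finite_wide sc S \<and> right_finite_wide sc S"
proof -
  note S = serre_subcatD[OF assms(3)]
  have "wide_subcat sc S"
    unfolding wide_subcat_def using S ker_closed_if_sub_closed coker_closed_if_quot_closed by blast
  moreover have "functorially_finite sc S"
    unfolding functorially_finite_def
    using serre_subcat_has_left_approx[OF assms(3)] serre_subcat_has_right_approx[OF assms(3)] by blast
  moreover have "torsion_class sc S" "torsionfree_class sc S"
    unfolding torsion_class_def torsionfree_class_def using S by blast+
  ultimately show ?thesis
    unfolding left_finite_wide_def right_finite_wide_def
    using W_L_eq_if_sub_closed[OF S(4)] W_R_eq_if_quot_closed[OF S(5)] by metis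
qed

end
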